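(* Let $i\in[s]$ and let $T$ be any tournament. Then every homomorphism from $F_i^{\bullet\bullet}$ (viewed as an ordinary digraph) to $T$ is injective.
   Context: All digraphs are finite and loopless; a tournament is a digraph in which every pair of distinct vertices is joined by exactly one arc. A homomorphism from a digraph $F$ to a digraph $H$ is a map $\varphi:V(F)\to V(H)$ with $(\varphi(u),\varphi(v))\in E(H)$ whenever $(u,v)\in E(F)$. Construction of $F_i^{\bullet\bullet}$: fix $s\in\mathbb{N}^+$, a positive integer $m$, and a tournament $F_0$ on vertex set $[m]$ satisfying: (I) every vertex has out-degree and in-degree at most $2m/3$; (II) there are no disjoint $A_1,A_2\subseteq[m]$ with $|A_1|=|A_2|=\lceil\sqrt m\,\rceil$ such that $(a_1,a_2)$ is an arc for all $a_1\in A_1,a_2\in A_2$; (III) for every $S\subseteq[m]$ with $|S|\ge 2m/13-\sqrt m$, $F_0[S]$ contains a directed cycle. Let $k_1,\dots,k_s$ be integers in the open interval $(2m/3+2,\,5m/6)$ with $k_i>k_{i+1}+1$ for $1\le i<s$. For $i\in[s]$, $F_i^{\bullet\bullet}$ is the digraph on vertex set $[m]\cup\{z_i,w_i\}$ ($z_i,w_i$ two new vertices, called roots) whose arcs are all arcs of $F_0$, together with the arcs $z_i\to v$ and $v\to w_i$ for every $1\le v\le k_i$, and the arcs $u\to z_i$ and $w_i\to u$ for every $k_i<u\le m$. There is no arc between $z_i$ and $w_i$. *)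

theory Defs
  imports Complex_Main
begin

text \<open>Digraphs: a vertex set V and an arc relation E (E u v means arc u -> v).\<close>

definition tournament :: "'a set \<Rightarrow> ('a \<Rightarrow> 'a \<Rightarrow> bool) \<Rightarrow> bool" where
  "tournament V E \<longleftrightarrow> finite V \<and> (\<forall>u v. E u v \<longrightarrow> u \<in> V \<and> v \<in> V) \<and> (\<forall>v. \<not> E v v) \<and>
     (\<forall>u\<in>V. \<forall>v\<in>V. u \<noteq> v \<longrightarrow> (E u v \<or> E v u) \<and> \<not> (E u v \<and> E v u))"

definition digraph_hom :: "'a set \<Rightarrow> ('a \<Rightarrow> 'a \<Rightarrow> bool) \<Rightarrow> 'b set \<Rightarrow> ('b \<Rightarrow> 'b \<Rightarrow> bool) \<Rightarrow> ('a \<Rightarrow> 'b) \<Rightarrow> bool" where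
  "digraph_hom VF EF VH EH \<phi> \<longleftrightarrow> (\<forall>v\<in>VF. \<phi> v \<in> VH) \<and>
     (\<forall>u\<in>VF. \<forall>v\<in>VF. EF u v \<longrightarrow> EH (\<phi> u) (\<phi> v))"

definition has_dicycle :: "'a set \<Rightarrow> ('a \<Rightarrow> 'a \<Rightarrow> bool) \<Rightarrow> bool" where
  "has_dicycle S E \<longleftrightarrow> (\<exists>xs. length xs \<ge> 2 \<and> distinct xs \<and> set xs \<subseteq> S \<and>
     (\<forall>j < length xs. E (xs ! j) (xs ! ((j + 1) mod length xs))))"

definition out_deg :: "'a set \<Rightarrow> ('a \<Rightarrow> 'a \<Rightarrow> bool) \<Rightarrow> 'a \<Rightarrow> nat" where
  "out_deg V E u = card {v \<in> V. E u v}"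

definition in_deg :: "'a set \<Rightarrow> ('a \<Rightarrow> 'a \<Rightarrow> bool) \<Rightarrow> 'a \<Rightarrow> nat" where
  "in_deg V E u = card {v \<in> V. E v u}"

text \<open>Vertices of F_i^{bullet bullet}: the vertices 1..m of F_0 plus the roots z_i, w_i.\<close>
datatype fvert = FV nat | Zr | Wr

definition Fi_verts :: "nat \<Rightarrow> fvert set" where
  "Fi_verts m = FV ` {1..m} \<union> {Zr, Wr}"

fun Fi_arc :: "(nat \<Rightarrow> nat \<Rightarrow> bool) \<Rightarrow> nat \<Rightarrow> nat \<Rightarrow> fvert \<Rightarrow> fvert \<Rightarrow> bool" where
  "Fi_arc E0 m k (FV a) (FV b) = (a \<in> {1..m} \<and> b \<in> {1..m} \<and> E0 a b)"
| "Fi_arc E0 m k Zr (FV v) = (1 \<le> v \<and> v \<le> k)"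
| "Fi_arc E0 m k (FV v) Wr = (1 \<le> v \<and> v \<le> k)"
| "Fi_arc E0 m k (FV u) Zr = (k < u \<and> u \<le> m)"
| "Fi_arc E0 m k Wr (FV u) = (k < u \<and> u \<le> m)"
| "Fi_arc E0 m k _ _ = False"

end

theory Submission
  imports Defs
begin

text \<open>Any two distinct vertices of \<open>F\<^sub>i\<^sup>\<bullet>\<^sup>\<bullet>\<close> other than the two roots are adjacent, so a
  homomorphism into a loopless digraph separates them; the roots are joined by the directed
  path \<open>z\<^sub>i \<rightarrow> 1 \<rightarrow> w\<^sub>i\<close>, so identifying them would create a 2-cycle, which a tournament
  does not contain.\<close>

lemma tournament_irrefl:
  assumes "tournament V E"
  shows "\<not> E x x"
  using assms unfolding tournament_def by blast

lemma tournament_asym: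
  assumes "tournament V E"
  shows "\<not> (E x y \<and> E y x)"
proof
  assume "E x y \<and> E y x"
  with assms show False unfolding tournament_def by (cases "x = y") blast+
qed

lemma digraph_hom_arc:
  assumes "digraph_hom VF EF VH EH \<phi>" "u \<in> VF" "v \<in> VF" "EF u v"
  shows "EH (\<phi> u) (\<phi> v)"
  using assms unfolding digraph_hom_def by blast

lemma digraph_hom_adjacent_distinct:
  assumes "digraph_hom VF EF VH EH \<phi>" "\<And>x. \<not> EH x x"
    and "u \<in> VF" "v \<in> VF" "EF u v \<or> EF v u"
  shows "\<phi> u \<noteq> \<phi> v"
  using assms digraph_hom_arc by metis

lemma digraph_hom_dipath2_distinct:
  assumes "digraph_hom VF EF VH EH \<phi>" "\<And>x y. \<not> (EH x y \<and> EH y x)"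
    and "u \<in> VF" "x \<in> VF" "w \<in> VF" "EF u x" "EF x w"
  shows "\<phi> u \<noteq> \<phi> w"
  using assms digraph_hom_arc by metis

lemma Fi_arc_adjacent:
  assumes "tournament {1..m} E0"
    and "x \<in> Fi_verts m" "y \<in> Fi_verts m" "x \<noteq> y" "{x, y} \<noteq> {Zr, Wr}"
  shows "Fi_arc E0 m k x y \<or> Fi_arc E0 m k y x"
  using assms(2-)
proof (cases x; cases y)
  fix a b assume "x = FV a" "y = FV b"
  moreover have "a \<in> {1..m} \<Longrightarrow> b \<in> {1..m} \<Longrightarrow> a \<noteq> b \<Longrightarrow> E0 a b \<or> E0 b a"
    using assms(1) unfolding tournament_def by blast
  ultimately show ?thesis
    using assms(2-4) by (auto simp: Fi_verts_def)
qed (auto simp: Fi_verts_def not_le)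

lemma Fi_root_path:
  assumes "1 \<le> m" "1 \<le> k"
  shows "FV 1 \<in> Fi_verts m \<and> Fi_arc E0 m k Zr (FV 1) \<and> Fi_arc E0 m k (FV 1) Wr"
  using assms by (auto simp: Fi_verts_def)

theorem claim4p2:
  fixes s m :: nat and E0 :: "nat \<Rightarrow> nat \<Rightarrow> bool" and k :: "nat \<Rightarrow> nat" and i :: nat
    and VT :: "'a set" and ET :: "'a \<Rightarrow> 'a \<Rightarrow> bool" and \<phi> :: "fvert \<Rightarrow> 'a"
  assumes s_pos: "s \<ge> 1" and m_pos: "m \<ge> 1"
    and F0_tour: "tournament {1..m} E0"
    and F0_I: "\<forall>u\<in>{1..m}. real (out_deg {1..m} E0 u) \<le> 2 * real m / 3 \<and>
                             real (in_deg {1..m} E0 u) \<le> 2 * real m / 3"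
    and F0_II: "\<not> (\<exists>A1 A2. A1 \<subseteq> {1..m} \<and> A2 \<subseteq> {1..m} \<and> A1 \<inter> A2 = {} \<and>
                   card A1 = nat \<lceil>sqrt (real m)\<rceil> \<and> card A2 = nat \<lceil>sqrt (real m)\<rceil> \<and>
                   (\<forall>a1\<in>A1. \<forall>a2\<in>A2. E0 a1 a2))"
    and F0_III: "\<forall>S. S \<subseteq> {1..m} \<and> real (card S) \<ge> 2 * real m / 13 - sqrt (real m)
                   \<longrightarrow> has_dicycle S E0"
    and k_range: "\<forall>j\<in>{1..s}. 2 * real m / 3 + 2 < real (k j) \<and> real (k j) < 5 * real m / 6"
    and k_dec: "\<forall>j. 1 \<le> j \<and> j < s \<longrightarrow> k j > k (j + 1) + 1"
    and i_in: "i \<in> {1..s}"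
    and T_tour: "tournament VT ET"
    and hom: "digraph_hom (Fi_verts m) (Fi_arc E0 m (k i)) VT ET \<phi>"
  shows "inj_on \<phi> (Fi_verts m)"
proof (rule inj_onI, rule ccontr)
  fix x y assume x: "x \<in> Fi_verts m" and y: "y \<in> Fi_verts m"
    and eq: "\<phi> x = \<phi> y" and ne: "x \<noteq> y"
  have k_pos: "1 \<le> k i"
    using k_range i_in by fastforce
  have roots: "\<phi> Zr \<noteq> \<phi> Wr"
    using Fi_root_path[OF m_pos k_pos, of E0]
      digraph_hom_dipath2_distinct[OF hom tournament_asym[OF T_tour], of Zr "FV 1" Wr]
    by (simp add: Fi_verts_def)
  show False
  proof (cases "{x, y} = {Zr, Wr}")
    case True
    then show False using eq roots by (auto simp: doubleton_eq_iff)
  next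
    case False
    then show False
      using digraph_hom_adjacent_distinct[OF hom tournament_irrefl[OF T_tour] x y]
        Fi_arc_adjacent[OF F0_tour x y ne] eq by blast
  qed
qed

end
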